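(* For every integer $n>0$, the diffeological space $\mathbb{TD}^n$ is not reflexive: there is a parametrization $f:(-1,1)\to\mathbb{TD}^n$ such that $g\circ f$ is smooth for every smooth function $g:\mathbb{TD}^n\to\mathbb{R}$, but $f$ is not a plot of $\mathbb{TD}^n$.
   Context: Define $\pi^n_{set}:\mathbb{R}^n\to\mathbb{R}^n$ by $\pi^n_{set}(v)=v$ if $\|v\|\le1$ and $\pi^n_{set}(v)=v/\|v\|$ if $\|v\|\ge1$. Let $\mathbb{TD}^n=\mathbb{R}^n/\!\sim$, where $v\sim w$ iff $\pi^n_{set}(v)=\pi^n_{set}(w)$, equipped with the quotient diffeology from $\mathbb{R}^n$ (so the projection $\pi_n:\mathbb{R}^n\to\mathbb{TD}^n$ is a subduction). A parametrization is a map from an open subset of a Euclidean space; a diffeological space is reflexive if every parametrization $P$ such that $g\circ P$ is smooth for all smooth $g$ into $\mathbb{R}$ is a plot. *)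

theory Defs
  imports "HOL-Analysis.Analysis"
begin

fun Ck_on :: "nat \<Rightarrow> 'a::euclidean_space set \<Rightarrow> ('a \<Rightarrow> 'b::real_normed_vector) \<Rightarrow> bool" where
  "Ck_on 0 U f = continuous_on U f"
| "Ck_on (Suc k) U f =
     (\<exists>f'. (\<forall>x\<in>U. (f has_derivative f' x) (at x)) \<and>
           (\<forall>i\<in>Basis. Ck_on k U (\<lambda>x. f' x i)))"

definition smooth_on :: "'a::euclidean_space set \<Rightarrow> ('a \<Rightarrow> 'b::real_normed_vector) \<Rightarrow> bool" where
  "smooth_on U f \<longleftrightarrow> (\<forall>k. Ck_on k U f)"

definition pi_set :: "real^'n \<Rightarrow> real^'n" where
  "pi_set v = (if norm v \<le> 1 then v else v /\<^sub>R norm v)"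

definition TD_proj :: "real^'n \<Rightarrow> (real^'n) set" where
  "TD_proj v = {w. pi_set w = pi_set v}"

definition TD_space :: "((real^'n) set) set" where
  "TD_space = range TD_proj"

definition TD_plot :: "'a::euclidean_space set \<Rightarrow> ('a \<Rightarrow> (real^'n) set) \<Rightarrow> bool" where
  "TD_plot U P \<longleftrightarrow> open U \<and> (\<forall>x\<in>U. P x \<in> TD_space) \<and>
     (\<forall>x\<in>U. \<exists>V (Q :: 'a \<Rightarrow> real^'n). open V \<and> x \<in> V \<and> V \<subseteq> U \<and> smooth_on V Q \<and>
        (\<forall>y\<in>V. TD_proj (Q y) = P y))"

text \<open>Smooth real functions on TD^n: since the projection is a subduction,
  g is smooth iff g composed with the projection is smooth on R^n.\<close>

definition TD_smooth_fun :: "((real^'n) set \<Rightarrow> real) \<Rightarrow> bool" where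
  "TD_smooth_fun g \<longleftrightarrow> smooth_on (UNIV :: (real^'n) set) (\<lambda>v. g (TD_proj v))"

end

theory Submission imports Defs begin

text \<open>
  The path \<open>t \<mapsto> [(1 - \<bar>t\<bar>) e]\<close>, with \<open>\<parallel>e\<parallel> = 1\<close>, bounces off the boundary sphere at \<open>t = 0\<close>.
  Every smooth \<open>g\<close> on \<open>TD\<^sup>n\<close> lifts to a smooth \<open>h\<close> on \<open>\<real>\<^sup>n\<close> that is constant on the ray
  \<open>{s e | s \<ge> 1}\<close>, so \<open>g\<close> along the path equals \<open>h((1 - t) e) + h((1 + t) e) - h e\<close>, which is
  smooth. But the classes of points of the open unit ball are singletons, so a local lift of
  the path near \<open>0\<close> must be \<open>t \<mapsto> (1 - \<bar>t\<bar>) e\<close> itself, which is not differentiable at \<open>0\<close>.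
\<close>

lemma Ck_on_const: "Ck_on k U (\<lambda>x. c)"
proof (induction k arbitrary: c)
  case 0
  then show ?case by simp
next
  case (Suc k)
  show ?case
    by (rule Ck_on.simps(2)[THEN iffD2], rule exI[of _ "\<lambda>x h. 0"]) (auto simp: Suc)
qed

lemma Ck_on_add: "Ck_on k U f \<Longrightarrow> Ck_on k U g \<Longrightarrow> Ck_on k U (\<lambda>x. f x + g x)"
proof (induction k arbitrary: f g)
  case 0
  then show ?case by (simp add: continuous_on_add)
next
  case (Suc k)
  from Suc.prems obtain f' g'
    where f': "\<forall>x\<in>U. (f has_derivative f' x) (at x)" "\<forall>i\<in>Basis. Ck_on k U (\<lambda>x. f' x i)"
      and g': "\<forall>x\<in>U. (g has_derivative g' x) (at x)" "\<forall>i\<in>Basis. Ck_on k U (\<lambda>x. g' x i)"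
    by auto
  show ?case
    by (rule Ck_on.simps(2)[THEN iffD2], rule exI[of _ "\<lambda>x h. f' x h + g' x h"])
      (auto intro!: has_derivative_add Suc.IH simp: f' g')
qed

lemma Ck_on_scaleR: "Ck_on k U f \<Longrightarrow> Ck_on k U (\<lambda>x. c *\<^sub>R f x)"
proof (induction k arbitrary: f)
  case 0
  then show ?case by (simp add: continuous_on_scaleR)
next
  case (Suc k)
  from Suc.prems obtain f'
    where f': "\<forall>x\<in>U. (f has_derivative f' x) (at x)" "\<forall>i\<in>Basis. Ck_on k U (\<lambda>x. f' x i)"
    by auto
  show ?case
    by (rule Ck_on.simps(2)[THEN iffD2], rule exI[of _ "\<lambda>x h. c *\<^sub>R f' x h"])
      (auto intro!: has_derivative_scaleR_right Suc.IH simp: f')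
qed

lemma Ck_on_sum:
  "finite S \<Longrightarrow> (\<And>i. i \<in> S \<Longrightarrow> Ck_on k U (f i)) \<Longrightarrow> Ck_on k U (\<lambda>x. \<Sum>i\<in>S. f i x)"
  by (induction S rule: finite_induct) (auto intro: Ck_on_const Ck_on_add)

lemma Ck_on_compose_line:
  fixes h :: "'a::euclidean_space \<Rightarrow> 'b::real_normed_vector" and U :: "real set"
  assumes "Ck_on k S h" and "\<And>t. t \<in> U \<Longrightarrow> a + t *\<^sub>R b \<in> S"
  shows "Ck_on k U (\<lambda>t. h (a + t *\<^sub>R b))"
  using assms
proof (induction k arbitrary: h)
  case 0
  have "continuous_on U (\<lambda>t. a + t *\<^sub>R b)"
    by (intro continuous_intros)
  with 0 show ?case
    by (auto intro: continuous_on_compose2[of S h])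
next
  case (Suc k)
  from Suc.prems obtain h'
    where h': "\<And>x. x \<in> S \<Longrightarrow> (h has_derivative h' x) (at x)"
              "\<And>i. i \<in> Basis \<Longrightarrow> Ck_on k S (\<lambda>x. h' x i)"
    by auto
  have der: "((\<lambda>t. h (a + t *\<^sub>R b)) has_derivative (\<lambda>s. h' (a + t *\<^sub>R b) (s *\<^sub>R b))) (at t)"
    if "t \<in> U" for t
  proof -
    have "((\<lambda>t. a + t *\<^sub>R b) has_derivative (\<lambda>s. s *\<^sub>R b)) (at t)"
      by (auto intro!: derivative_eq_intros)
    from has_derivative_compose[OF this h'(1)] that Suc.prems(2) show ?thesis
      by (simp add: o_def)
  qed
  have directional: "h' x (s *\<^sub>R b) = s *\<^sub>R (\<Sum>i\<in>Basis. (b \<bullet> i) *\<^sub>R h' x i)"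
    if "x \<in> S" for x s
  proof -
    have "linear (h' x)"
      using h'(1)[OF that] has_derivative_linear by blast
    then have "h' x (s *\<^sub>R (\<Sum>i\<in>Basis. (b \<bullet> i) *\<^sub>R i)) = s *\<^sub>R (\<Sum>i\<in>Basis. (b \<bullet> i) *\<^sub>R h' x i)"
      by (simp add: linear_sum linear_scale)
    then show ?thesis
      by (simp add: euclidean_representation)
  qed
  let ?D = "\<lambda>t. \<Sum>i\<in>Basis. (b \<bullet> i) *\<^sub>R h' (a + t *\<^sub>R b) i"
  have "((\<lambda>t. h (a + t *\<^sub>R b)) has_derivative (\<lambda>s. s *\<^sub>R ?D t)) (at t)" if "t \<in> U" for t
    using der[OF that] by (simp only: directional[OF Suc.prems(2)[OF that]])
  moreover have "Ck_on k U ?D"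
    by (intro Ck_on_sum Ck_on_scaleR Suc.IH h'(2) Suc.prems(2)) auto
  ultimately show ?case
    by (auto intro!: exI[of _ "\<lambda>t s. s *\<^sub>R ?D t"])
qed

lemma smooth_on_differentiable_at:
  assumes "smooth_on U f" and "x \<in> U"
  shows "f differentiable (at x)"
proof -
  from assms(1) have "Ck_on (Suc 0) U f"
    by (simp add: smooth_on_def)
  with assms(2) show ?thesis
    by (auto simp: differentiable_def)
qed

lemma abs_not_differentiable_at_0: "\<not> (abs differentiable (at (0::real)))"
proof
  assume "abs differentiable (at (0::real))"
  then obtain D where D: "(abs has_real_derivative D) (at 0)"
    by (auto simp: real_differentiable_def)
  have "D = 0"
    by (rule DERIV_local_min[OF D, of 1]) auto
  moreover have "D = 1"
  proof (rule has_field_derivative_unique)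
    show "((\<lambda>t. t) has_real_derivative D) (at 0 within {0..1})"
      by (rule has_field_derivative_transform_within[OF has_field_derivative_at_within[OF D], of 1])
        auto
    show "((\<lambda>t. t) has_real_derivative 1) (at 0 within {0..1})"
      by (rule DERIV_ident)
    show "at (0::real) within {0..1} \<noteq> bot"
      by (simp add: trivial_limit_within)
  qed
  ultimately show False by simp
qed

lemma tent_not_differentiable_at_0:
  fixes e :: "'a::real_inner"
  assumes "e \<noteq> 0"
  shows "\<not> ((\<lambda>t::real. (1 - \<bar>t\<bar>) *\<^sub>R e) differentiable (at 0))"
proof
  assume "(\<lambda>t::real. (1 - \<bar>t\<bar>) *\<^sub>R e) differentiable (at 0)"
  then have "(\<lambda>t. 1 - ((1 - \<bar>t\<bar>) *\<^sub>R e) \<bullet> e / (e \<bullet> e)) differentiable (at 0)"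
    by (intro differentiable_diff differentiable_const differentiable_divide differentiable_inner)
      (use assms in auto)
  moreover have "(\<lambda>t. 1 - ((1 - \<bar>t\<bar>) *\<^sub>R e) \<bullet> e / (e \<bullet> e)) = abs"
    using assms by (simp add: fun_eq_iff inner_diff_left field_simps)
  ultimately show False
    using abs_not_differentiable_at_0 by simp
qed

lemma TD_proj_eq_iff: "TD_proj v = TD_proj w \<longleftrightarrow> pi_set v = pi_set w"
  by (auto simp: TD_proj_def)

lemma pi_set_scaleR_unit:
  assumes "norm e = 1" and "1 \<le> s"
  shows "pi_set (s *\<^sub>R e) = e"
  using assms by (auto simp: pi_set_def)

lemma pi_set_eq_iff_inside:
  assumes "norm w < 1"
  shows "pi_set v = pi_set w \<longleftrightarrow> v = w"
proof -
  have "norm (pi_set v) = 1" if "\<not> norm v \<le> 1"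
  proof -
    from that have "norm v \<noteq> 0"
      by auto
    with that show ?thesis
      by (simp add: pi_set_def)
  qed
  moreover have "pi_set w = w"
    using assms by (simp add: pi_set_def)
  ultimately show ?thesis
    using assms by (auto simp: pi_set_def split: if_splits)
qed

definition TD_tent :: "real^'n \<Rightarrow> real \<Rightarrow> (real^'n) set" where
  "TD_tent e t = TD_proj ((1 - \<bar>t\<bar>) *\<^sub>R e)"

lemma tent_split_if_constant_on_ray:
  fixes h :: "'a::real_vector \<Rightarrow> 'b::ab_group_add"
  assumes "\<And>s. 1 \<le> s \<Longrightarrow> h (s *\<^sub>R e) = h e"
  shows "h ((1 - \<bar>t\<bar>) *\<^sub>R e) = h ((1 - t) *\<^sub>R e) + h ((1 + t) *\<^sub>R e) - h e"
proof (cases "t \<ge> 0")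
  case True
  then show ?thesis using assms[of "1 + t"] by simp
next
  case False
  then show ?thesis using assms[of "1 - t"] by simp
qed

lemma smooth_on_comp_TD_tent:
  fixes e :: "real^'n"
  assumes "norm e = 1" and "TD_smooth_fun g"
  shows "smooth_on U (g \<circ> TD_tent e)"
proof -
  define h where "h = (\<lambda>v :: real^'n. g (TD_proj v))"
  have h_smooth: "Ck_on k UNIV h" for k
    using assms(2) by (simp add: TD_smooth_fun_def smooth_on_def h_def)
  have rays: "h (s *\<^sub>R e) = h e" if "1 \<le> s" for s
  proof -
    have "TD_proj (s *\<^sub>R e) = TD_proj e"
      using pi_set_scaleR_unit[OF assms(1) that] pi_set_scaleR_unit[OF assms(1), of 1]
      by (simp add: TD_proj_eq_iff)
    then show ?thesis
      by (simp add: h_def)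
  qed
  have "g \<circ> TD_tent e = (\<lambda>t. (h (e + t *\<^sub>R (- e)) + h (e + t *\<^sub>R e)) + - h e)"
  proof
    fix t
    have "(g \<circ> TD_tent e) t = h ((1 - \<bar>t\<bar>) *\<^sub>R e)"
      by (simp add: TD_tent_def h_def)
    also have "\<dots> = h ((1 - t) *\<^sub>R e) + h ((1 + t) *\<^sub>R e) - h e"
      by (rule tent_split_if_constant_on_ray[OF rays])
    finally show "(g \<circ> TD_tent e) t = (h (e + t *\<^sub>R (- e)) + h (e + t *\<^sub>R e)) + - h e"
      by (simp add: algebra_simps)
  qed
  moreover have "Ck_on k U (\<lambda>t. (h (e + t *\<^sub>R (- e)) + h (e + t *\<^sub>R e)) + - h e)" for k
    by (intro Ck_on_add Ck_on_const Ck_on_compose_line[OF h_smooth] UNIV_I)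
  ultimately show ?thesis
    unfolding smooth_on_def by simp
qed

lemma TD_tent_not_plot:
  fixes e :: "real^'n"
  assumes "norm e = 1" and "0 \<in> U"
  shows "\<not> TD_plot U (TD_tent e)"
proof
  assume "TD_plot U (TD_tent e)"
  with assms(2) have "\<exists>V (Q :: real \<Rightarrow> real^'n). open V \<and> 0 \<in> V \<and> smooth_on V Q \<and>
      (\<forall>y\<in>V. TD_proj (Q y) = TD_tent e y)"
    unfolding TD_plot_def by blast
  then obtain V and Q :: "real \<Rightarrow> real^'n"
    where "open V" "0 \<in> V" "smooth_on V Q" and lift: "\<And>y. y \<in> V \<Longrightarrow> TD_proj (Q y) = TD_tent e y"
    by blast
  define W where "W = V \<inter> ball 0 1"
  have "open W" "0 \<in> W"
    using \<open>open V\<close> \<open>0 \<in> V\<close> by (auto simp: W_def)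
  have Q_off_0: "Q y = (1 - \<bar>y\<bar>) *\<^sub>R e" if "y \<in> W" "y \<noteq> 0" for y
  proof -
    have "norm ((1 - \<bar>y\<bar>) *\<^sub>R e) < 1"
      using that assms(1) by (auto simp: W_def)
    with lift[of y] that show ?thesis
      by (simp add: W_def TD_tent_def TD_proj_eq_iff pi_set_eq_iff_inside)
  qed
  obtain D where D: "(Q has_derivative D) (at 0)"
    using smooth_on_differentiable_at[OF \<open>smooth_on V Q\<close> \<open>0 \<in> V\<close>]
    by (auto simp: differentiable_def)
  have "Q 0 = e"
  proof (rule LIM_unique)
    show "Q \<midarrow>0\<rightarrow> Q 0"
      using has_derivative_continuous[OF D] by (simp add: isCont_def)
    have "eventually (\<lambda>y. (1 - \<bar>y\<bar>) *\<^sub>R e = Q y) (at 0)"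
      using \<open>open W\<close> \<open>0 \<in> W\<close> Q_off_0 by (auto simp: eventually_at_topological)
    moreover have "(\<lambda>y::real. (1 - \<bar>y\<bar>) *\<^sub>R e) \<midarrow>0\<rightarrow> (1 - \<bar>0\<bar>) *\<^sub>R e"
      by (intro tendsto_intros)
    ultimately show "Q \<midarrow>0\<rightarrow> e"
      by (simp add: tendsto_cong)
  qed
  with Q_off_0 have "Q y = (1 - \<bar>y\<bar>) *\<^sub>R e" if "y \<in> W" for y
    using that by (cases "y = 0") auto
  with D \<open>open W\<close> \<open>0 \<in> W\<close> have "((\<lambda>y. (1 - \<bar>y\<bar>) *\<^sub>R e) has_derivative D) (at 0)"
    by (rule has_derivative_transform_within_open)
  moreover have "e \<noteq> 0"
    using assms(1) by auto
  ultimately show False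
    using tent_not_differentiable_at_0 by (auto simp: differentiable_def)
qed

theorem proposition8p3:
  shows "\<exists>f :: real \<Rightarrow> (real^'n) set.
           (\<forall>t\<in>{-1<..<1}. f t \<in> TD_space) \<and>
           (\<forall>g. TD_smooth_fun g \<longrightarrow> smooth_on {-1<..<1} (g \<circ> f)) \<and>
           \<not> TD_plot {-1<..<1} f"
proof -
  obtain e :: "real^'n" where e: "norm e = 1"
    using vector_choose_size[of 1] by auto
  have "TD_tent e t \<in> TD_space" for t
    by (simp add: TD_tent_def TD_space_def)
  moreover have "(0::real) \<in> {-1<..<1}"
    by simp
  ultimately show ?thesis
    using smooth_on_comp_TD_tent[OF e] TD_tent_not_plot[OF e] by blast
qed

end
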